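(* In the data-center model with three levels of data locality under the JSQ-MW algorithm, for every time slot $t$, $\langle\mathbf Q(t),\mathbf U(t)\rangle=\sum_{m=1}^M Q_m(t)U_m(t)<M^2$.
   Context: There are $M$ servers, with one queue per server; $Q_m(t)$ is the length of queue $m$ (tasks local to server $m$) at slot $t$. $A_m(t)$ is the number of tasks routed to queue $m$ at slot $t$. Each server processes at most one task at a time and in slot $t$ any server $n$ may be working on a task from any queue; $S_m(t)$ is the total number of service completions (local, rack-local and remote, each a Bernoulli variable per serving server) allocated to queue $m$ in slot $t$, so $\sum_m S_m(t)\le M$. The unused service is $U_m(t)=\max\{0,S_m(t)-A_m(t)-Q_m(t)\}$, and $Q_m(t+1)=Q_m(t)+A_m(t)-S_m(t)+U_m(t)$. Under JSQ-MW an arriving type-$\bar L$ task joins its shortest local queue and an idle server $m$ serves a task from a queue in $\arg\max_n\{\alpha Q_nI_{\{n=m\}},\beta Q_nI_{\{K(n)=K(m)\}},\gamma Q_nI_{\{K(n)\ne K(m)\}}\}$. *)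

theory Defs
  imports Main
begin

text \<open>Sample-path model. Queues and servers are indexed by 0..<M, time slots by nat.
  Q m t: queue length, A m t: arrivals routed to queue m in slot t,
  serve t n: the queue (if any) whose task server n works on in slot t,
  c t n: Bernoulli (0/1) completion outcome of server n in slot t.\<close>

definition service :: "nat \<Rightarrow> (nat \<Rightarrow> nat \<Rightarrow> nat option) \<Rightarrow> (nat \<Rightarrow> nat \<Rightarrow> nat)
    \<Rightarrow> nat \<Rightarrow> nat \<Rightarrow> nat" where
  "service M serve c m t = (\<Sum>n<M. if serve t n = Some m then c t n else 0)"

text \<open>Unused service U_m(t) = max{0, S_m(t) - A_m(t) - Q_m(t)}; on nat, truncated
  subtraction is exactly this maximum.\<close>
definition unused :: "(nat \<Rightarrow> nat \<Rightarrow> nat) \<Rightarrow> (nat \<Rightarrow> nat \<Rightarrow> nat) \<Rightarrow> (nat \<Rightarrow> nat \<Rightarrow> nat)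
    \<Rightarrow> nat \<Rightarrow> nat \<Rightarrow> nat" where
  "unused Q A S m t = S m t - A m t - Q m t"

definition queue_dynamics :: "nat \<Rightarrow> (nat \<Rightarrow> nat \<Rightarrow> nat) \<Rightarrow> (nat \<Rightarrow> nat \<Rightarrow> nat)
    \<Rightarrow> (nat \<Rightarrow> nat \<Rightarrow> nat) \<Rightarrow> bool" where
  "queue_dynamics M Q A S \<longleftrightarrow> (\<forall>t. \<forall>m<M.
     int (Q m (Suc t)) = int (Q m t) + int (A m t) - int (S m t) + int (unused Q A S m t))"

end

theory Submission
  imports Defs
begin

text \<open>Each server completes at most one task per slot, so the total service in a slot is at
  most M. Unused service at queue m is positive only when its queue length is smaller than its
  service, so Q_m U_m \<le> (S_m - 1) S_m \<le> (M - 1) S_m, and summing over m gives at most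
  (M - 1) M < M^2. Neither the routing rule nor the queue dynamics enter.\<close>

lemma sum_if_Some_eq_le:
  fixes x :: "nat option" and v :: nat
  shows "(\<Sum>m<M. if x = Some m then v else 0) \<le> v"
proof (cases "\<exists>k<M. x = Some k")
  case True
  then obtain k where k: "k < M" "x = Some k" by blast
  have "(\<Sum>m<M. if x = Some m then v else 0) = (\<Sum>m<M. if m = k then v else 0)"
    using k by (intro sum.cong) auto
  also have "\<dots> = v" using k by simp
  finally show ?thesis by simp
next
  case False
  then have "(\<Sum>m<M. if x = Some m then v else 0) = 0" by (intro sum.neutral) auto
  then show ?thesis by simp
qed

lemma sum_service_le:
  assumes "\<And>n. n < M \<Longrightarrow> c t n \<le> 1"
  shows "(\<Sum>m<M. service M serve c m t) \<le> M"
proof -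
  have "(\<Sum>m<M. service M serve c m t)
      = (\<Sum>n<M. \<Sum>m<M. if serve t n = Some m then c t n else 0)"
    unfolding service_def by (rule sum.swap)
  also have "\<dots> \<le> (\<Sum>n<M. c t n)" by (intro sum_mono sum_if_Some_eq_le)
  also have "\<dots> \<le> (\<Sum>n<M. 1)" using assms by (intro sum_mono) auto
  finally show ?thesis by simp
qed

lemma queue_mult_unused_le:
  "Q m t * unused Q A S m t \<le> (S m t - 1) * S m t"
proof (cases "unused Q A S m t = 0")
  case False
  then have "Q m t \<le> S m t - 1" unfolding unused_def by simp
  moreover have "unused Q A S m t \<le> S m t" unfolding unused_def by simp
  ultimately show ?thesis by (rule mult_le_mono)
qed simp

theorem lemmaA3:
  fixes M :: nat and Q A :: "nat \<Rightarrow> nat \<Rightarrow> nat"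
    and serve :: "nat \<Rightarrow> nat \<Rightarrow> nat option" and c :: "nat \<Rightarrow> nat \<Rightarrow> nat"
  assumes "M \<ge> 1"
    and "\<And>t n. n < M \<Longrightarrow> c t n \<le> 1"
    and "\<And>t n m. n < M \<Longrightarrow> serve t n = Some m \<Longrightarrow> m < M"
    and "queue_dynamics M Q A (service M serve c)"
  shows "(\<Sum>m<M. Q m t * unused Q A (service M serve c) m t) < M ^ 2"
proof -
  let ?S = "service M serve c"
  have total: "(\<Sum>m<M. ?S m t) \<le> M"
    using assms(2) by (rule sum_service_le)
  have single: "?S m t \<le> M" if "m < M" for m
    using member_le_sum[of m "{..<M}" "\<lambda>m. ?S m t"] that total by auto
  have "(\<Sum>m<M. Q m t * unused Q A ?S m t) \<le> (\<Sum>m<M. (M - 1) * ?S m t)"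
  proof (rule sum_mono)
    fix m assume "m \<in> {..<M}"
    then have "?S m t - 1 \<le> M - 1" using single diff_le_mono by simp
    then show "Q m t * unused Q A ?S m t \<le> (M - 1) * ?S m t"
      using queue_mult_unused_le[of Q m t A ?S] mult_le_mono1 le_trans by blast
  qed
  also have "\<dots> = (M - 1) * (\<Sum>m<M. ?S m t)" by (simp add: sum_distrib_left)
  also have "\<dots> \<le> (M - 1) * M" using total by simp
  also have "\<dots> < M ^ 2" using assms(1) by (simp add: power2_eq_square)
  finally show ?thesis .
qed

end
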